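(* Let $\mu$ be a probability measure with bounded support contained in $[0,\infty)$, let $b=\sup\operatorname{supp}\mu$, and fix $q\in(0,1]$. Then the map $\Phi:(b,\infty)\to\mathbb R$, $$\Phi(x)=\frac{2\,D_\mu(x)\,\varphi_\mu(x;1)}{D_\mu'(x)},$$ is continuous, nonincreasing, and takes values in $[-1,0]$.
   Context: For $s\in[0,1]$ and $x>b$, set $\varphi_\mu(x;s)=s\int\frac{x}{x^2-t^2}\,d\mu(t)+\frac{1-s}{x}$, and let $\varphi_\mu'(x;s)$ denote its derivative in $x$, namely $\varphi_\mu'(x;s)=-\big(s\int\frac{x^2+t^2}{(x^2-t^2)^2}\,d\mu(t)+\frac{1-s}{x^2}\big)$. Define $D_\mu(x)=\varphi_\mu(x;1)\,\varphi_\mu(x;q)$, with derivative $D_\mu'(x)=\varphi_\mu'(x;1)\varphi_\mu(x;q)+\varphi_\mu(x;1)\varphi_\mu'(x;q)$. *)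

theory Defs
  imports "HOL-Probability.Probability"
begin

definition msupp :: "real measure \<Rightarrow> real set" where
  "msupp \<mu> = {x. \<forall>e>0. emeasure \<mu> (ball x e) > 0}"

definition phi :: "real measure \<Rightarrow> real \<Rightarrow> real \<Rightarrow> real" where
  "phi \<mu> x s = s * (\<integral>t. x / (x\<^sup>2 - t\<^sup>2) \<partial>\<mu>) + (1 - s) / x"

definition phi' :: "real measure \<Rightarrow> real \<Rightarrow> real \<Rightarrow> real" where
  "phi' \<mu> x s = - (s * (\<integral>t. (x\<^sup>2 + t\<^sup>2) / (x\<^sup>2 - t\<^sup>2)\<^sup>2 \<partial>\<mu>) + (1 - s) / x\<^sup>2)"

definition Dmu :: "real measure \<Rightarrow> real \<Rightarrow> real \<Rightarrow> real" where
  "Dmu \<mu> q x = phi \<mu> x 1 * phi \<mu> x q"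

definition Dmu' :: "real measure \<Rightarrow> real \<Rightarrow> real \<Rightarrow> real" where
  "Dmu' \<mu> q x = phi' \<mu> x 1 * phi \<mu> x q + phi \<mu> x 1 * phi' \<mu> x q"

definition Phi :: "real measure \<Rightarrow> real \<Rightarrow> real \<Rightarrow> real" where
  "Phi \<mu> q x = 2 * Dmu \<mu> q x * phi \<mu> x 1 / Dmu' \<mu> q x"

end

theory Submission
  imports Defs
begin

text \<open>
  Put \<open>r(x,t) = x\<^sup>2/(x\<^sup>2 - t\<^sup>2) \<ge> 1\<close> and \<open>m\<^sub>k(x) = \<integral> r(x,t)\<^sup>k d\<mu>(t)\<close>. Then
  \<open>\<phi>(x;s) = (s m\<^sub>1 + 1 - s)/x\<close> and \<open>\<phi>'(x;s) = -(s (2m\<^sub>2 - m\<^sub>1) + 1 - s)/x\<^sup>2\<close>, so that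
  \<open>\<Phi> = -2 / K(w, f)\<close> with the rational function \<open>K = Phi_denom q\<close> of \<open>w = 1/m\<^sub>1\<close> and
  \<open>f = (2m\<^sub>2 - m\<^sub>1)/m\<^sub>1\<^sup>2\<close>. Differentiating under the integral gives
  \<open>m\<^sub>k' = -(2k/x)(m\<^sub>k\<^sub>+\<^sub>1 - m\<^sub>k)\<close>; together with the Cauchy-Schwarz inequalities
  \<open>m\<^sub>k\<^sub>+\<^sub>1\<^sup>2 \<le> m\<^sub>k m\<^sub>k\<^sub>+\<^sub>2\<close> this shows that, as \<open>x\<close> grows, \<open>w\<close> increases while \<open>f\<close> and \<open>f + w\<close>
  decrease. \<open>K\<close> is increasing in \<open>f\<close> and decreasing along the lines \<open>f + w = const\<close>, hence
  \<open>K\<close> decreases in \<open>x\<close>; moreover \<open>f \<ge> 2 - w\<close> forces \<open>K \<ge> 2\<close>.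
\<close>

lemma difference_quotient_estimate:
  fixes g g' :: "real \<Rightarrow> real"
  assumes deriv: "\<And>z. z \<in> closed_segment x y \<Longrightarrow> (g has_real_derivative g' z) (at z)"
    and close: "\<And>z. z \<in> closed_segment x y \<Longrightarrow> \<bar>g' z - g' x\<bar> \<le> e"
    and "x \<noteq> y"
  shows "\<bar>(g y - g x) / (y - x) - g' x\<bar> \<le> e"
proof -
  define h where "h z = g z - g' x * z" for z
  have "norm (h y - h x) \<le> e * norm (y - x)"
  proof (rule field_differentiable_bound[of "closed_segment x y"])
    fix z assume z: "z \<in> closed_segment x y"
    show "(h has_field_derivative g' z - g' x) (at z within closed_segment x y)"
      unfolding h_def using has_field_derivative_at_within[OF deriv[OF z]]
      by (auto intro!: derivative_eq_intros)
    show "norm (g' z - g' x) \<le> e"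
      using close[OF z] by simp
  qed auto
  then have "\<bar>(g y - g x) - g' x * (y - x)\<bar> \<le> e * \<bar>y - x\<bar>"
    unfolding h_def by (simp add: algebra_simps)
  moreover have "(g y - g x) / (y - x) - g' x = ((g y - g x) - g' x * (y - x)) / (y - x)"
    using \<open>x \<noteq> y\<close> by (simp add: diff_divide_distrib)
  ultimately show ?thesis
    using \<open>x \<noteq> y\<close> by (simp add: abs_divide divide_le_eq)
qed

lemma integral_difference_quotient_bound:
  fixes M :: "real measure" and f f' :: "real \<Rightarrow> real \<Rightarrow> real"
  assumes "prob_space M" and AE: "AE t in M. t \<in> K"
    and int: "integrable M (f x)" "integrable M (f y)" "integrable M (f' x)"
    and bound: "\<And>t. t \<in> K \<Longrightarrow> \<bar>(f y t - f x t) / (y - x) - f' x t\<bar> \<le> e"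
  shows "\<bar>((\<integral>t. f y t \<partial>M) - (\<integral>t. f x t \<partial>M)) / (y - x) - (\<integral>t. f' x t \<partial>M)\<bar> \<le> e"
proof -
  interpret prob_space M by fact
  have "\<bar>((\<integral>t. f y t \<partial>M) - (\<integral>t. f x t \<partial>M)) / (y - x) - (\<integral>t. f' x t \<partial>M)\<bar>
      = \<bar>\<integral>t. (f y t - f x t) / (y - x) - f' x t \<partial>M\<bar>"
    using int by simp
  also have "\<dots> \<le> (\<integral>t. \<bar>(f y t - f x t) / (y - x) - f' x t\<bar> \<partial>M)"
    by (rule integral_abs_bound)
  also have "\<dots> \<le> (\<integral>t. e \<partial>M)"
  proof (rule integral_mono_AE)
    show "AE t in M. \<bar>(f y t - f x t) / (y - x) - f' x t\<bar> \<le> e"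
      using AE by eventually_elim (rule bound)
  qed (use int in auto)
  also have "\<dots> = e"
    by (simp add: prob_space)
  finally show ?thesis .
qed

lemma has_real_derivative_integral:
  fixes M :: "real measure" and f f' :: "real \<Rightarrow> real \<Rightarrow> real"
  assumes "prob_space M"
    and AE: "AE t in M. t \<in> K" and "compact K"
    and "open U" and "x0 \<in> U"
    and deriv: "\<And>x t. x \<in> U \<Longrightarrow> t \<in> K \<Longrightarrow> ((\<lambda>x. f x t) has_real_derivative f' x t) (at x)"
    and cont: "continuous_on (U \<times> K) (\<lambda>(x, t). f' x t)"
    and int: "\<And>x. x \<in> U \<Longrightarrow> integrable M (f x)"
    and int': "integrable M (f' x0)"
  shows "((\<lambda>x. \<integral>t. f x t \<partial>M) has_real_derivative (\<integral>t. f' x0 t \<partial>M)) (at x0)"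
  unfolding has_field_derivative_iff
proof (rule LIM_I)
  fix r :: real assume "0 < r"
  obtain d0 where "d0 > 0" and d0: "cball x0 d0 \<subseteq> U"
    using \<open>open U\<close> \<open>x0 \<in> U\<close> open_contains_cball by blast
  have "uniformly_continuous_on (cball x0 d0 \<times> K) (\<lambda>(x, t). f' x t)"
    using d0 by (intro compact_uniformly_continuous continuous_on_subset[OF cont]
        compact_Times \<open>compact K\<close>) auto
  then obtain d where "d > 0" and d: "\<forall>p\<in>cball x0 d0 \<times> K. \<forall>p'\<in>cball x0 d0 \<times> K.
      dist p' p < d \<longrightarrow> dist ((\<lambda>(x, t). f' x t) p') ((\<lambda>(x, t). f' x t) p) < r/2"
    using \<open>0 < r\<close> unfolding uniformly_continuous_on_def by (meson half_gt_zero)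
  have close: "\<bar>f' x t - f' x0 t\<bar> < r/2" if "x \<in> cball x0 d0" "t \<in> K" "\<bar>x - x0\<bar> < d" for x t
    using d[rule_format, of "(x0, t)" "(x, t)"] that \<open>d0 > 0\<close>
    by (simp add: dist_Pair_Pair dist_real_def)
  show "\<exists>s>0. \<forall>y. y \<noteq> x0 \<and> norm (y - x0) < s \<longrightarrow>
      norm (((\<integral>t. f y t \<partial>M) - (\<integral>t. f x0 t \<partial>M)) / (y - x0) - (\<integral>t. f' x0 t \<partial>M)) < r"
  proof (intro exI[of _ "min d d0"] conjI allI impI)
    fix y assume y: "y \<noteq> x0 \<and> norm (y - x0) < min d d0"
    have seg: "z \<in> cball x0 d0" "\<bar>z - x0\<bar> < d" if "z \<in> closed_segment x0 y" for z
      using segment_bound1[OF that] y by (auto simp: dist_norm abs_minus_commute)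
    have quot: "\<bar>(f y t - f x0 t) / (y - x0) - f' x0 t\<bar> \<le> r/2" if "t \<in> K" for t
    proof (rule difference_quotient_estimate[where g="\<lambda>x. f x t" and g'="\<lambda>x. f' x t"])
      fix z assume z: "z \<in> closed_segment x0 y"
      show "((\<lambda>x. f x t) has_real_derivative f' z t) (at z)"
        using deriv[OF _ that] seg(1)[OF z] d0 by blast
      show "\<bar>f' z t - f' x0 t\<bar> \<le> r/2"
        using close[OF seg(1)[OF z] that seg(2)[OF z]] by simp
    qed (use y in simp)
    have "y \<in> U" using seg[of y] d0 by auto
    have "norm (((\<integral>t. f y t \<partial>M) - (\<integral>t. f x0 t \<partial>M)) / (y - x0) - (\<integral>t. f' x0 t \<partial>M)) \<le> r/2"
      using integral_difference_quotient_bound[where f=f and f'=f' and x=x0 and y=y,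
          OF \<open>prob_space M\<close> AE int[OF \<open>x0 \<in> U\<close>]
          int[OF \<open>y \<in> U\<close>] int' quot] by simp
    then show "norm (((\<integral>t. f y t \<partial>M) - (\<integral>t. f x0 t \<partial>M)) / (y - x0) - (\<integral>t. f' x0 t \<partial>M)) < r"
      using \<open>0 < r\<close> by simp
  qed (use \<open>d > 0\<close> \<open>d0 > 0\<close> in simp)
qed

lemma AE_in_msupp:
  fixes \<mu> :: "real measure"
  assumes "sets \<mu> = sets borel"
  shows "AE t in \<mu>. t \<in> msupp \<mu>"
proof -
  define \<F> where "\<F> = {ball x e | x e. e > 0 \<and> emeasure \<mu> (ball x e) = 0}"
  have "\<And>B. B \<in> \<F> \<Longrightarrow> open B"
    unfolding \<F>_def by auto
  then obtain \<F>' where "\<F>' \<subseteq> \<F>" "countable \<F>'" "\<Union>\<F>' = \<Union>\<F>"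
    by (rule Lindelof)
  moreover have "B \<in> null_sets \<mu>" if "B \<in> \<F>" for B
  proof -
    from that obtain x e where "B = ball x e" "emeasure \<mu> (ball x e) = 0"
      unfolding \<F>_def by blast
    moreover have "ball x e \<in> sets \<mu>"
      unfolding assms by simp
    ultimately show ?thesis by (simp add: null_sets_def)
  qed
  ultimately have "(\<Union>B\<in>\<F>'. B) \<in> null_sets \<mu>"
    by (intro null_sets_UN') auto
  then have "\<Union>\<F> \<in> null_sets \<mu>"
    using \<open>\<Union>\<F>' = \<Union>\<F>\<close> by simp
  moreover have "- msupp \<mu> \<subseteq> \<Union>\<F>"
  proof
    fix x assume "x \<in> - msupp \<mu>"
    then obtain e where "e > 0" "emeasure \<mu> (ball x e) = 0"
      unfolding msupp_def by (auto simp: not_less)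
    then have "ball x e \<in> \<F>" unfolding \<F>_def by blast
    then show "x \<in> \<Union>\<F>" using \<open>e > 0\<close> by (meson UnionI centre_in_ball)
  qed
  ultimately show ?thesis
    by (intro AE_I'[where N="\<Union>\<F>"]) auto
qed

lemma AE_in_Icc_Sup_msupp:
  fixes \<mu> :: "real measure"
  assumes "sets \<mu> = sets borel" and "bounded (msupp \<mu>)" and "msupp \<mu> \<subseteq> {0..}"
  shows "AE t in \<mu>. t \<in> {0..Sup (msupp \<mu>)}"
  using AE_in_msupp[OF assms(1)]
proof eventually_elim
  fix t assume "t \<in> msupp \<mu>"
  moreover have "bdd_above (msupp \<mu>)"
    using assms(2) by (rule bounded_imp_bdd_above)
  ultimately have "t \<le> Sup (msupp \<mu>)"
    by (rule cSup_upper)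
  moreover have "0 \<le> t"
    using \<open>t \<in> msupp \<mu>\<close> assms(3) by auto
  ultimately show "t \<in> {0..Sup (msupp \<mu>)}"
    by simp
qed

definition Phi_denom :: "real \<Rightarrow> real \<Rightarrow> real \<Rightarrow> real" where
  "Phi_denom q w f = (f * (2*q + (1-q)*w) + (1-q)*w^2) / (q + (1-q)*w)"

lemma Phi_denom_denominator_pos:
  fixes q w :: real
  assumes "0 < q" "q \<le> 1" "0 < w"
  shows "0 < q + (1-q)*w"
  using assms mult_nonneg_nonneg[of "1 - q" w] by linarith

lemma Phi_denom_mono:
  assumes "0 < q" "q \<le> 1" "0 < w" "f' \<le> f"
  shows "Phi_denom q w f' \<le> Phi_denom q w f"
  unfolding Phi_denom_def using assms Phi_denom_denominator_pos[OF assms(1-3)]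
  by (intro divide_right_mono add_right_mono mult_right_mono) auto

lemma Phi_denom_antimono_diagonal:
  assumes "0 < q" "q \<le> 1" "0 < w1" "w1 \<le> w2" "0 \<le> s"
  shows "Phi_denom q w2 (s - w2) \<le> Phi_denom q w1 (s - w1)"
proof -
  define u where "u = 1 - q"
  have "0 \<le> u" using assms u_def by simp
  have eq: "Phi_denom q w (s - w) = (s*(2*q + u*w) - 2*q*w) / (q + u*w)" for w
    unfolding Phi_denom_def u_def by (simp add: algebra_simps power2_eq_square)
  have "(s*(2*q + u*w1) - 2*q*w1) * (q + u*w2) - (s*(2*q + u*w2) - 2*q*w2) * (q + u*w1)
      = (w2 - w1) * (s*q*u + 2*q^2)"
    by (simp add: algebra_simps power2_eq_square)
  also have "\<dots> \<ge> 0"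
    using assms \<open>0 \<le> u\<close> by simp
  finally show ?thesis
    unfolding eq u_def using assms Phi_denom_denominator_pos[of q w1] Phi_denom_denominator_pos[of q w2]
    by (simp add: divide_simps mult.commute)
qed

lemma Phi_denom_antimono:
  assumes "0 < q" "q \<le> 1" "0 < w1" "w1 \<le> w2"
    and "0 \<le> f2" "f2 \<le> f1" "f2 + w2 \<le> f1 + w1"
  shows "Phi_denom q w2 f2 \<le> Phi_denom q w1 f1"
proof -
  have "Phi_denom q w2 f2 \<le> Phi_denom q w2 ((f1 + w1) - w2)"
    using assms by (intro Phi_denom_mono) auto
  also have "\<dots> \<le> Phi_denom q w1 ((f1 + w1) - w1)"
    using assms by (intro Phi_denom_antimono_diagonal) auto
  finally show ?thesis by simp
qed

lemma two_le_Phi_denom: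
  assumes "0 < q" "q \<le> 1" "0 < w" "w \<le> 1" "2 - w \<le> f"
  shows "2 \<le> Phi_denom q w f"
proof -
  have "2 \<le> Phi_denom q w (2 - w)"
  proof -
    have "(2 - w) * (2*q + (1-q)*w) + (1-q)*w^2 - 2 * (q + (1-q)*w) = 2*q*(1 - w)"
      by (simp add: algebra_simps power2_eq_square)
    moreover have "0 \<le> 2*q*(1 - w)"
      using assms by simp
    ultimately have "2 * (q + (1-q)*w) \<le> (2 - w) * (2*q + (1-q)*w) + (1-q)*w^2"
      by linarith
    then show ?thesis
      unfolding Phi_denom_def using Phi_denom_denominator_pos[OF assms(1-3)]
      by (simp add: le_divide_eq)
  qed
  also have "\<dots> \<le> Phi_denom q w f"
    using assms by (intro Phi_denom_mono) auto
  finally show ?thesis .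
qed

lemma Phi_denom_recip_eq:
  fixes q a A :: real
  assumes "a \<noteq> 0" "q*a + 1 - q \<noteq> 0"
  shows "-2 / Phi_denom q (1/a) (A/a^2)
    = -2 * a^2 * (q*a + 1 - q) / (A * (q*a + 1 - q) + a * (q*A + 1 - q))"
proof -
  have "A/a^2 * (2*q + (1-q) * (1/a)) + (1-q) * (1/a)^2 = (A * (2*q*a + 1 - q) + (1-q) * a) / a^3"
    using assms by (simp add: field_simps power2_eq_square power3_eq_cube)
  moreover have "q + (1-q) * (1/a) = (q*a + 1 - q) / a"
    using assms by (simp add: field_simps)
  moreover have "A * (2*q*a + 1 - q) + (1-q) * a = A * (q*a + 1 - q) + a * (q*A + 1 - q)"
    by (simp add: algebra_simps)
  ultimately have "Phi_denom q (1/a) (A/a^2)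
      = (A * (q*a + 1 - q) + a * (q*A + 1 - q)) / (a^2 * (q*a + 1 - q))"
    unfolding Phi_denom_def using assms by (simp add: power2_eq_square power3_eq_cube)
  then show ?thesis by (simp add: mult.assoc)
qed

lemma Phi_quotient_eq:
  fixes x a A p B :: real
  assumes "x \<noteq> 0"
  shows "2 * ((a/x) * (p/x)) * (a/x) / (-(A/x^2) * (p/x) + (a/x) * -(B/x^2))
    = -2 * a^2 * p / (A * p + a * B)"
proof -
  have "2 * ((a/x) * (p/x)) * (a/x) = (2 * a^2 * p) / x^3"
    by (simp add: power2_eq_square power3_eq_cube)
  moreover have "-(A/x^2) * (p/x) + (a/x) * -(B/x^2) = -((A * p + a * B) / x^3)"
    by (simp add: power2_eq_square power3_eq_cube add_divide_distrib)
  ultimately have "2 * ((a/x) * (p/x)) * (a/x) / (-(A/x^2) * (p/x) + (a/x) * -(B/x^2))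
      = (2 * a^2 * p) / x^3 / -((A * p + a * B) / x^3)"
    by (simp only:)
  also have "\<dots> = -2 * a^2 * p / (A * p + a * B)"
    using assms by (cases "A * p + a * B = 0") (simp_all add: field_simps)
  finally show ?thesis .
qed

lemma moment_quotient_derivative_nonpos:
  fixes a m n z c :: real
  assumes "1 \<le> a" "a \<le> m" "m^2 \<le> a * n" "0 < z" "0 \<le> c"
  shows "((2 * (-(4/z) * (n - m)) - c * (-(2/z) * (m - a))) * a^2
      - (2*m - c*a) * (2 * a * (-(2/z) * (m - a)))) / (a^2 * a^2) \<le> 0"
proof -
  have "(2 * (-(4/z) * (n - m)) - c * (-(2/z) * (m - a))) * a^2
      - (2*m - c*a) * (2 * a * (-(2/z) * (m - a)))
      = -((a/z) * (8 * (a*n - m^2) + 2 * c * a * (m - a)))"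
    using assms by (simp add: field_simps power2_eq_square)
  moreover have "0 \<le> (a/z) * (8 * (a*n - m^2) + 2 * c * a * (m - a))"
    using assms by simp
  ultimately show ?thesis
    using assms by (intro divide_nonpos_pos) auto
qed

definition sq_ratio :: "real \<Rightarrow> real \<Rightarrow> real" where
  "sq_ratio x t = x^2 / (x^2 - t^2)"

definition ratio_moment :: "real measure \<Rightarrow> nat \<Rightarrow> real \<Rightarrow> real" where
  "ratio_moment \<mu> k x = (\<integral>t. sq_ratio x t ^ k \<partial>\<mu>)"

lemma sq_ratio_bounds:
  assumes "0 \<le> t" "t \<le> b" "b < x"
  shows "1 \<le> sq_ratio x t" "sq_ratio x t \<le> sq_ratio x b"
proof -
  have "t^2 \<le> b^2" "b^2 < x^2"
    using assms by (auto intro: power_mono power_strict_mono)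
  then show "1 \<le> sq_ratio x t"
    unfolding sq_ratio_def by (simp add: le_divide_eq)
  show "sq_ratio x t \<le> sq_ratio x b"
    unfolding sq_ratio_def using \<open>t^2 \<le> b^2\<close> \<open>b^2 < x^2\<close>
    by (intro divide_left_mono) (auto intro: mult_pos_pos)
qed

lemma sq_ratio_has_derivative:
  assumes "x \<noteq> 0" "t^2 \<noteq> x^2"
  shows "((\<lambda>x. sq_ratio x t) has_real_derivative -(2/x) * (sq_ratio x t ^ 2 - sq_ratio x t)) (at x)"
proof -
  define d where "d = x^2 - t^2"
  have "d \<noteq> 0" using assms d_def by simp
  have "((\<lambda>x. x^2 / (x^2 - t^2)) has_real_derivative
      (2*x * d - x^2 * (2*x)) / (d * d)) (at x)"
    unfolding d_def using \<open>d \<noteq> 0\<close> d_def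
    by (intro DERIV_divide) (auto intro!: derivative_eq_intros)
  moreover have "2*x * d - x^2 * (2*x) = -2 * x * t^2"
    unfolding d_def by (simp add: algebra_simps)
  moreover have "sq_ratio x t ^ 2 - sq_ratio x t = x^2 * (x^2 - d) / (d * d)"
    unfolding sq_ratio_def d_def[symmetric] using \<open>d \<noteq> 0\<close>
    by (simp add: field_simps power2_eq_square)
  moreover have "x^2 - d = t^2"
    unfolding d_def by simp
  ultimately show ?thesis
    unfolding sq_ratio_def using \<open>x \<noteq> 0\<close> by (simp add: power2_eq_square mult.assoc)
qed

lemma sq_ratio_power_has_derivative:
  assumes "x \<noteq> 0" "t^2 \<noteq> x^2"
  shows "((\<lambda>x. sq_ratio x t ^ k) has_real_derivative
      -(2 * real k / x) * (sq_ratio x t ^ Suc k - sq_ratio x t ^ k)) (at x)"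
proof -
  have "real k * (-(2/x) * (sq_ratio x t ^ 2 - sq_ratio x t) * sq_ratio x t ^ (k - Suc 0))
      = -(2 * real k / x) * (sq_ratio x t ^ Suc k - sq_ratio x t ^ k)"
    by (cases k) (simp_all add: algebra_simps power2_eq_square)
  then show ?thesis
    by (rule DERIV_cong[OF DERIV_power[OF sq_ratio_has_derivative[OF assms]]])
qed

locale prob_space_Icc = prob_space \<mu> for \<mu> :: "real measure" +
  fixes b :: real
  assumes sets_eq_borel: "sets \<mu> = sets borel"
    and AE_in_Icc: "AE t in \<mu>. t \<in> {0..b}"
begin

abbreviation moment :: "nat \<Rightarrow> real \<Rightarrow> real" where
  "moment \<equiv> ratio_moment \<mu>"

lemma b_nonneg: "0 \<le> b"
proof (rule ccontr)
  assume "\<not> 0 \<le> b"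
  from AE_in_Icc have "AE t in \<mu>. False"
    by eventually_elim (use \<open>\<not> 0 \<le> b\<close> in auto)
  then show False
    by (simp add: AE_False)
qed

lemma integrable_sq_ratio_power:
  assumes "b < x"
  shows "integrable \<mu> (\<lambda>t. sq_ratio x t ^ k)"
proof (rule integrable_const_bound[where B="sq_ratio x b ^ k"])
  show "AE t in \<mu>. norm (sq_ratio x t ^ k) \<le> sq_ratio x b ^ k"
    using AE_in_Icc
  proof eventually_elim
    fix t assume "t \<in> {0..b}"
    then have "1 \<le> sq_ratio x t" "sq_ratio x t \<le> sq_ratio x b"
      using sq_ratio_bounds[OF _ _ assms] by auto
    then show "norm (sq_ratio x t ^ k) \<le> sq_ratio x b ^ k"
      by (simp add: power_mono)
  qed
  show "(\<lambda>t. sq_ratio x t ^ k) \<in> borel_measurable \<mu>"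
    unfolding measurable_cong_sets[OF sets_eq_borel refl] sq_ratio_def by measurable
qed

lemma moment_0 [simp]: "moment 0 x = 1"
  unfolding ratio_moment_def by (simp add: prob_space)

lemma moment_mono_AE:
  assumes "b < x" and "AE t in \<mu>. sq_ratio x t ^ j \<le> sq_ratio x t ^ k"
  shows "moment j x \<le> moment k x"
  unfolding ratio_moment_def
  using assms integrable_sq_ratio_power by (intro integral_mono_AE) auto

lemma moment_le_Suc:
  assumes "b < x"
  shows "moment k x \<le> moment (Suc k) x"
proof (rule moment_mono_AE[OF assms])
  show "AE t in \<mu>. sq_ratio x t ^ k \<le> sq_ratio x t ^ Suc k"
    using AE_in_Icc
  proof eventually_elim
    fix t assume "t \<in> {0..b}"
    then have "1 \<le> sq_ratio x t"
      using sq_ratio_bounds[OF _ _ assms] by auto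
    then show "sq_ratio x t ^ k \<le> sq_ratio x t ^ Suc k"
      by (rule power_increasing[rotated]) simp
  qed
qed

lemma one_le_moment:
  assumes "b < x"
  shows "1 \<le> moment k x"
proof (induction k)
  case (Suc k)
  then show ?case using moment_le_Suc[OF assms, of k] by simp
qed simp

lemma integral_moment_combination:
  assumes "b < x"
  shows "(\<integral>t. \<alpha> * sq_ratio x t ^ i + \<beta> * sq_ratio x t ^ j + \<gamma> * sq_ratio x t ^ k \<partial>\<mu>)
    = \<alpha> * moment i x + \<beta> * moment j x + \<gamma> * moment k x"
  using integrable_sq_ratio_power[OF assms] unfolding ratio_moment_def by simp

lemma moment_sq_le:
  assumes "b < x"
  shows "(moment (Suc k) x)^2 \<le> moment k x * moment (Suc (Suc k)) x"
proof -
  define a where "a = moment (Suc k) x / moment k x"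
  have "moment k x > 0"
    using one_le_moment[OF assms, of k] by linarith
  have expand: "sq_ratio x t ^ k * (sq_ratio x t - a)^2
      = 1 * sq_ratio x t ^ Suc (Suc k) + (-2*a) * sq_ratio x t ^ Suc k + a^2 * sq_ratio x t ^ k" for t
    by (simp add: algebra_simps power2_eq_square)
  have "0 \<le> (\<integral>t. sq_ratio x t ^ k * (sq_ratio x t - a)^2 \<partial>\<mu>)"
  proof (rule integral_nonneg_AE)
    show "AE t in \<mu>. 0 \<le> sq_ratio x t ^ k * (sq_ratio x t - a)^2"
      using AE_in_Icc
    proof eventually_elim
      fix t assume "t \<in> {0..b}"
      then have "1 \<le> sq_ratio x t"
        using sq_ratio_bounds[OF _ _ assms] by auto
      then show "0 \<le> sq_ratio x t ^ k * (sq_ratio x t - a)^2"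
        by simp
    qed
  qed
  also have "\<dots> = moment (Suc (Suc k)) x - 2*a * moment (Suc k) x + a^2 * moment k x"
    unfolding expand integral_moment_combination[OF assms] by simp
  also have "\<dots> = moment (Suc (Suc k)) x - (moment (Suc k) x)^2 / moment k x"
    unfolding a_def using \<open>moment k x > 0\<close> by (simp add: field_simps power2_eq_square)
  finally show ?thesis
    using \<open>moment k x > 0\<close> by (simp add: field_simps)
qed

lemma moment_has_derivative:
  assumes "b < x"
  shows "(moment k has_real_derivative -(2 * real k / x) * (moment (Suc k) x - moment k x)) (at x)"
proof -
  have x: "x \<noteq> 0" "t^2 \<noteq> x^2" if "b < x" "t \<in> {0..b}" for x t
    using that b_nonneg by (auto dest: power_strict_mono[of t x 2])
  have deriv: "(moment k has_real_derivative
      (\<integral>t. -(2 * real k / x) * (sq_ratio x t ^ Suc k - sq_ratio x t ^ k) \<partial>\<mu>)) (at x)"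
    unfolding ratio_moment_def[abs_def]
  proof (rule has_real_derivative_integral[OF prob_space_axioms AE_in_Icc compact_Icc open_greaterThan])
    show "continuous_on ({b<..} \<times> {0..b})
        (\<lambda>(x, t). -(2 * real k / x) * (sq_ratio x t ^ Suc k - sq_ratio x t ^ k))"
      unfolding sq_ratio_def case_prod_unfold using x
      by (intro continuous_intros) auto
    have "integrable \<mu> (\<lambda>t. sq_ratio x t ^ Suc k - sq_ratio x t ^ k)"
      by (intro Bochner_Integration.integrable_diff integrable_sq_ratio_power assms)
    then show "integrable \<mu> (\<lambda>t. -(2 * real k / x) * (sq_ratio x t ^ Suc k - sq_ratio x t ^ k))"
      by simp
  qed (use assms x integrable_sq_ratio_power sq_ratio_power_has_derivative in auto)
  have eq: "(\<integral>t. -(2 * real k / x) * (sq_ratio x t ^ Suc k - sq_ratio x t ^ k) \<partial>\<mu>)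
      = -(2 * real k / x) * (moment (Suc k) x - moment k x)"
    unfolding ratio_moment_def integral_mult_right_zero
    by (simp only: Bochner_Integration.integral_diff[OF integrable_sq_ratio_power[OF assms]
          integrable_sq_ratio_power[OF assms]])
  show ?thesis
    using DERIV_cong[OF deriv eq] .
qed

lemma continuous_on_moment: "continuous_on {b<..} (moment k)"
  using moment_has_derivative
  by (auto intro!: continuous_at_imp_continuous_on DERIV_isCont)

lemma moment_antimono:
  assumes "b < x" "x \<le> y"
  shows "moment k y \<le> moment k x"
proof (rule DERIV_nonpos_imp_nonincreasing[OF assms(2)])
  fix z assume "x \<le> z" "z \<le> y"
  then have "b < z" using assms by simp
  moreover have "0 < z" using \<open>b < z\<close> b_nonneg by simp
  ultimately have "-(2 * real k / z) * (moment (Suc k) z - moment k z) \<le> 0"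
    using moment_le_Suc[of z k] by (simp add: mult_nonneg_nonneg)
  with moment_has_derivative[OF \<open>b < z\<close>]
  show "\<exists>y. (moment k has_real_derivative y) (at z) \<and> y \<le> 0" by blast
qed

lemma moment_quotient_antimono:
  assumes "0 \<le> c" "b < x" "x \<le> y"
  shows "(2 * moment 2 y - c * moment 1 y) / (moment 1 y)^2
    \<le> (2 * moment 2 x - c * moment 1 x) / (moment 1 x)^2"
proof (rule DERIV_nonpos_imp_nonincreasing[OF assms(3)])
  fix z assume "x \<le> z" "z \<le> y"
  then have "b < z" using assms by simp
  then have "0 < z" using b_nonneg by simp
  define a m n where "a = moment 1 z" and "m = moment 2 z" and "n = moment 3 z"
  have "1 \<le> a" "a \<le> m" "m^2 \<le> a * n"
    unfolding a_def m_def n_def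
    using one_le_moment[OF \<open>b < z\<close>] moment_le_Suc[OF \<open>b < z\<close>, of 1]
      moment_sq_le[OF \<open>b < z\<close>, of 1] by (simp_all add: numeral_eq_Suc)
  have da: "(moment 1 has_real_derivative -(2/z) * (m - a)) (at z)"
    using moment_has_derivative[OF \<open>b < z\<close>, of 1] by (simp add: a_def m_def numeral_eq_Suc)
  have dm: "(moment 2 has_real_derivative -(4/z) * (n - m)) (at z)"
    using moment_has_derivative[OF \<open>b < z\<close>, of 2] by (simp add: m_def n_def numeral_eq_Suc)
  have dN: "((\<lambda>z. 2 * moment 2 z - c * moment 1 z) has_real_derivative
      2 * (-(4/z) * (n - m)) - c * (-(2/z) * (m - a))) (at z)"
    by (intro DERIV_diff DERIV_cmult da dm)
  have dD: "((\<lambda>z. (moment 1 z)^2) has_real_derivative 2 * a * (-(2/z) * (m - a))) (at z)"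
    by (rule DERIV_cong[OF DERIV_power[OF da, of 2]]) (simp add: a_def)
  have "((\<lambda>z. (2 * moment 2 z - c * moment 1 z) / (moment 1 z)^2) has_real_derivative
      ((2 * (-(4/z) * (n - m)) - c * (-(2/z) * (m - a))) * a^2 - (2*m - c*a) * (2 * a * (-(2/z) * (m - a))))
        / (a^2 * a^2)) (at z)"
    using DERIV_divide[OF dN dD] \<open>1 \<le> a\<close> unfolding a_def m_def by simp
  moreover have "((2 * (-(4/z) * (n - m)) - c * (-(2/z) * (m - a))) * a^2
      - (2*m - c*a) * (2 * a * (-(2/z) * (m - a)))) / (a^2 * a^2) \<le> 0"
    using \<open>1 \<le> a\<close> \<open>a \<le> m\<close> \<open>m^2 \<le> a * n\<close> \<open>0 < z\<close> \<open>0 \<le> c\<close>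
    by (rule moment_quotient_derivative_nonpos)
  ultimately show "\<exists>d. ((\<lambda>z. (2 * moment 2 z - c * moment 1 z) / (moment 1 z)^2)
      has_real_derivative d) (at z) \<and> d \<le> 0"
    by blast
qed

lemma phi_eq:
  assumes "b < x"
  shows "phi \<mu> x s = (s * moment 1 x + 1 - s) / x"
proof -
  have "x \<noteq> 0" using assms b_nonneg by simp
  then have "(\<lambda>t. x / (x^2 - t^2)) = (\<lambda>t. sq_ratio x t ^ 1 / x)"
    by (auto simp: sq_ratio_def power2_eq_square)
  then have "phi \<mu> x s = s * (moment 1 x / x) + (1 - s) / x"
    unfolding phi_def ratio_moment_def by simp
  also have "\<dots> = (s * moment 1 x + 1 - s) / x"
    using \<open>x \<noteq> 0\<close> by (simp add: field_simps)
  finally show ?thesis .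
qed

lemma phi'_eq:
  assumes "b < x"
  shows "phi' \<mu> x s = -(s * (2 * moment 2 x - moment 1 x) + 1 - s) / x^2"
proof -
  have "x \<noteq> 0" using assms b_nonneg by simp
  have pointwise: "(x^2 + t^2) / (x^2 - t^2)^2
      = (2 / x^2) * sq_ratio x t ^ 2 + (-1 / x^2) * sq_ratio x t ^ 1 + 0 * sq_ratio x t ^ 0" for t
  proof (cases "x^2 = t^2")
    \<comment> \<open>for \<open>t = \<plusminus>x\<close> both sides are \<open>0\<close> (division by zero), so no a.e. argument is needed\<close>
    case False
    define d where "d = x^2 - t^2"
    have "d \<noteq> 0" "x^2 + t^2 = 2 * x^2 - d"
      using False by (simp_all add: d_def)
    then show ?thesis
      unfolding sq_ratio_def d_def[symmetric] \<open>x^2 + t^2 = 2 * x^2 - d\<close> using \<open>x \<noteq> 0\<close>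
      by (simp add: field_simps power2_eq_square)
  qed (simp add: sq_ratio_def)
  show ?thesis
    unfolding phi'_def pointwise integral_moment_combination[OF assms] using \<open>x \<noteq> 0\<close>
    by (simp add: field_simps)
qed

definition Phi_denom_at :: "real \<Rightarrow> real \<Rightarrow> real" where
  "Phi_denom_at q x = Phi_denom q (1 / moment 1 x) ((2 * moment 2 x - moment 1 x) / (moment 1 x)^2)"

lemma Phi_eq:
  assumes "b < x" "0 < q" "q \<le> 1"
  shows "Phi \<mu> q x = -2 / Phi_denom_at q x"
proof -
  define a A where "a = moment 1 x" and "A = 2 * moment 2 x - moment 1 x"
  have "x \<noteq> 0" using assms b_nonneg by simp
  have "1 \<le> a" unfolding a_def by (rule one_le_moment[OF assms(1)])
  then have "q * 1 \<le> q * a" using assms by (intro mult_left_mono) auto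
  then have "q*a + 1 - q \<noteq> 0" using assms by linarith
  have "Phi \<mu> q x = 2 * ((a/x) * ((q*a + 1 - q)/x)) * (a/x)
      / (-(A/x^2) * ((q*a + 1 - q)/x) + (a/x) * -((q*A + 1 - q)/x^2))"
    unfolding Phi_def Dmu_def Dmu'_def phi_eq[OF assms(1)] phi'_eq[OF assms(1)] a_def A_def
    by (simp add: minus_divide_left)
  also have "\<dots> = -2 * a^2 * (q*a + 1 - q) / (A * (q*a + 1 - q) + a * (q*A + 1 - q))"
    by (rule Phi_quotient_eq[OF \<open>x \<noteq> 0\<close>])
  also have "\<dots> = -2 / Phi_denom q (1/a) (A/a^2)"
    using \<open>1 \<le> a\<close> \<open>q*a + 1 - q \<noteq> 0\<close> by (intro Phi_denom_recip_eq[symmetric]) auto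
  finally show ?thesis
    unfolding Phi_denom_at_def a_def A_def .
qed

lemma two_minus_recip_le:
  assumes "b < x"
  shows "2 - 1 / moment 1 x \<le> (2 * moment 2 x - moment 1 x) / (moment 1 x)^2"
proof -
  have "1 \<le> moment 1 x" by (rule one_le_moment[OF assms])
  moreover have "(moment 1 x)^2 \<le> moment 2 x"
    using moment_sq_le[OF assms, of 0] by (simp add: numeral_eq_Suc)
  ultimately show ?thesis
    by (simp add: field_simps power2_eq_square)
qed

lemma two_le_Phi_denom_at:
  assumes "b < x" "0 < q" "q \<le> 1"
  shows "2 \<le> Phi_denom_at q x"
  unfolding Phi_denom_at_def using assms one_le_moment[OF assms(1), of 1]
  by (intro two_le_Phi_denom two_minus_recip_le) auto

lemma Phi_denom_at_antimono:
  assumes "b < x" "x \<le> y" "0 < q" "q \<le> 1"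
  shows "Phi_denom_at q y \<le> Phi_denom_at q x"
proof -
  have "b < y" using assms by simp
  \<comment> \<open>\<open>f + w\<close> is the quotient of \<open>moment_quotient_antimono\<close> with \<open>c = 0\<close>\<close>
  have sum_eq: "(2 * moment 2 z - moment 1 z) / (moment 1 z)^2 + 1 / moment 1 z
      = (2 * moment 2 z - 0 * moment 1 z) / (moment 1 z)^2" if "b < z" for z
    using one_le_moment[OF that, of 1] by (simp add: field_simps power2_eq_square)
  show ?thesis
    unfolding Phi_denom_at_def
  proof (rule Phi_denom_antimono)
    show "1 / moment 1 x \<le> 1 / moment 1 y"
      using moment_antimono[OF assms(1,2), of 1] one_le_moment[OF assms(1), of 1]
        one_le_moment[OF \<open>b < y\<close>, of 1]
      by (intro divide_left_mono mult_pos_pos) auto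
    have "1 / moment 1 y \<le> 1"
      using one_le_moment[OF \<open>b < y\<close>, of 1] by simp
    then show "0 \<le> (2 * moment 2 y - moment 1 y) / (moment 1 y)^2"
      using two_minus_recip_le[OF \<open>b < y\<close>] by linarith
    show "(2 * moment 2 y - moment 1 y) / (moment 1 y)^2 \<le> (2 * moment 2 x - moment 1 x) / (moment 1 x)^2"
      using moment_quotient_antimono[OF _ assms(1,2), of 1] by simp
    show "(2 * moment 2 y - moment 1 y) / (moment 1 y)^2 + 1 / moment 1 y
        \<le> (2 * moment 2 x - moment 1 x) / (moment 1 x)^2 + 1 / moment 1 x"
      unfolding sum_eq[OF assms(1)] sum_eq[OF \<open>b < y\<close>]
      by (rule moment_quotient_antimono[OF _ assms(1,2)]) simp
  qed (use assms one_le_moment[OF assms(1), of 1] in auto)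
qed

lemma continuous_on_Phi_denom_at:
  assumes "0 < q" "q \<le> 1"
  shows "continuous_on {b<..} (Phi_denom_at q)"
proof -
  have "moment 1 x \<noteq> 0" "q + (1 - q) * (1 / moment 1 x) \<noteq> 0" if "b < x" for x
    using one_le_moment[OF that, of 1] Phi_denom_denominator_pos[OF assms, of "1 / moment 1 x"]
    by auto
  then show ?thesis
    unfolding Phi_denom_at_def[abs_def] Phi_denom_def
    by (intro continuous_intros continuous_on_moment) auto
qed

lemma continuous_on_Phi:
  assumes "0 < q" "q \<le> 1"
  shows "continuous_on {b<..} (Phi \<mu> q)"
proof -
  have "continuous_on {b<..} (\<lambda>x. -2 / Phi_denom_at q x)"
  proof (intro continuous_on_divide continuous_on_const continuous_on_Phi_denom_at assms ballI)
    fix x assume "x \<in> {b<..}"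
    then show "Phi_denom_at q x \<noteq> 0"
      using two_le_Phi_denom_at[OF _ assms, of x] by simp
  qed
  moreover have "continuous_on {b<..} (Phi \<mu> q) = continuous_on {b<..} (\<lambda>x. -2 / Phi_denom_at q x)"
    by (rule continuous_on_cong) (simp_all add: Phi_eq[OF _ assms])
  ultimately show ?thesis by simp
qed

lemma Phi_antimono:
  assumes "b < x" "x \<le> y" "0 < q" "q \<le> 1"
  shows "Phi \<mu> q y \<le> Phi \<mu> q x"
proof -
  have "b < y" using assms by simp
  have "2 / Phi_denom_at q x \<le> 2 / Phi_denom_at q y"
    using Phi_denom_at_antimono[OF assms] two_le_Phi_denom_at[OF assms(1,3,4)]
      two_le_Phi_denom_at[OF \<open>b < y\<close> assms(3,4)]
    by (intro divide_left_mono mult_pos_pos) auto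
  then show ?thesis
    by (simp add: Phi_eq[OF assms(1,3,4)] Phi_eq[OF \<open>b < y\<close> assms(3,4)])
qed

lemma Phi_in_Icc:
  assumes "b < x" "0 < q" "q \<le> 1"
  shows "Phi \<mu> q x \<in> {-1..0}"
proof -
  have "2 / Phi_denom_at q x \<le> 1" "0 \<le> 2 / Phi_denom_at q x"
    using two_le_Phi_denom_at[OF assms] by simp_all
  then show ?thesis
    by (simp add: Phi_eq[OF assms])
qed

end

theorem mainTheorem12:
  fixes \<mu> :: "real measure" and q b :: real
  assumes "prob_space \<mu>"
    and "sets \<mu> = sets borel"
    and "bounded (msupp \<mu>)"
    and "msupp \<mu> \<subseteq> {0..}"
    and "b = Sup (msupp \<mu>)"
    and "0 < q" and "q \<le> 1"
  shows "continuous_on {b<..} (Phi \<mu> q)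
    \<and> (\<forall>x y. b < x \<longrightarrow> x \<le> y \<longrightarrow> Phi \<mu> q y \<le> Phi \<mu> q x)
    \<and> (\<forall>x. b < x \<longrightarrow> Phi \<mu> q x \<in> {-1..0})"
proof -
  have "AE t in \<mu>. t \<in> {0..b}"
    using AE_in_Icc_Sup_msupp[OF assms(2-4)] assms(5) by simp
  with assms(1,2) interpret prob_space_Icc \<mu> b
    by (intro prob_space_Icc.intro prob_space_Icc_axioms.intro)
  show ?thesis
    using continuous_on_Phi Phi_antimono Phi_in_Icc assms(6,7) by blast
qed

end
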